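(* Let $q$ be a Boolean conjunctive query without self-join, let $F\in q$ with $\mathit{key}(F)=\emptyset$, and let $q'=q\setminus\{F\}$. Let $\vec{y}$ be a sequence of distinct variables with $\{\text{variables of }\vec{y}\}=\mathit{vars}(F)$. Let ${\mathbf{db}}$ be an uncertain database that is purified relative to $q$, and let $D$ be the active domain of ${\mathbf{db}}$. Then ${\mathbf{db}}\in\mathsf{CERTAINTY}(q)$ if and only if ${\mathbf{db}}\neq\emptyset$ and for all $\vec{b}\in D^{|\vec{y}|}$, if $F[\vec{y}\mapsto\vec{b}]\in{\mathbf{db}}$ then ${\mathbf{db}}\in\mathsf{CERTAINTY}(q'[\vec{y}\mapsto\vec{b}])$.
   Context: Relation names have signatures $[n,k]$ ($n\ge k\ge1$; arity $n$, primary key positions $1,\dots,k$). Atoms have variables or constants as arguments; a fact is an atom with only constants; facts are key-equal if they have the same relation name and agree on the primary key. $\mathit{key}(F)$ is the set of variables in the primary-key positions of atom $F$, $\mathit{vars}(F)$ its set of variables. An uncertain database is a finite set of facts; its active domain is the set of constants occurring in it; a repair is a maximal subset with no two distinct key-equal facts. A Boolean conjunctive query $q$ is a finite set of atoms (existentially closed conjunction) with variable set $\mathit{vars}(q)$; it has a self-join if a relation name occurs in two of its atoms. $\mathsf{CERTAINTY}(q)$ is the set of uncertain databases all of whose repairs satisfy $q$. For a sequence $\vec{y}=\langle y_1,\dots,y_\ell\rangle$ of distinct variables and constants $\vec{b}=\langle b_1,\dots,b_\ell\rangle$, $X[\vec{y}\mapsto\vec{b}]$ replaces each occurrence of $y_i$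 in $X$ by $b_i$. ${\mathbf{db}}$ is purified relative to $q$ if every fact $A\in{\mathbf{db}}$ satisfies $A\in\theta(q)\subseteq{\mathbf{db}}$ for some valuation $\theta$ over $\mathit{vars}(q)$. *)

theory Defs
  imports Main
begin

text \<open>Relation names carry their signature [n,k]: a relation name is a triple
  (name, n, k) with arity n and primary key positions 1..k.\<close>

type_synonym 'n rel = "'n \<times> nat \<times> nat"

definition arity :: "'n rel \<Rightarrow> nat" where "arity R = fst (snd R)"
definition keylen :: "'n rel \<Rightarrow> nat" where "keylen R = snd (snd R)"

datatype ('v, 'c) trm = Var 'v | Const 'c

datatype ('n, 'v, 'c) atom = Atom (relname: "'n rel") (args: "('v, 'c) trm list")

definition wf_atom :: "('n, 'v, 'c) atom \<Rightarrow> bool" where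
  "wf_atom A \<longleftrightarrow> 1 \<le> keylen (relname A) \<and> keylen (relname A) \<le> arity (relname A)
      \<and> length (args A) = arity (relname A)"

definition is_fact :: "('n, 'v, 'c) atom \<Rightarrow> bool" where
  "is_fact A \<longleftrightarrow> wf_atom A \<and> (\<forall>t \<in> set (args A). \<exists>c. t = Const c)"

definition key_equal :: "('n, 'v, 'c) atom \<Rightarrow> ('n, 'v, 'c) atom \<Rightarrow> bool" where
  "key_equal A B \<longleftrightarrow> relname A = relname B
      \<and> take (keylen (relname A)) (args A) = take (keylen (relname B)) (args B)"

definition vars_of_terms :: "('v, 'c) trm list \<Rightarrow> 'v set" where
  "vars_of_terms ts = {v. Var v \<in> set ts}"

definition avars :: "('n, 'v, 'c) atom \<Rightarrow> 'v set" where
  "avars A = vars_of_terms (args A)"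

definition key :: "('n, 'v, 'c) atom \<Rightarrow> 'v set" where
  "key A = vars_of_terms (take (keylen (relname A)) (args A))"

definition qvars :: "('n, 'v, 'c) atom set \<Rightarrow> 'v set" where
  "qvars q = (\<Union>A\<in>q. avars A)"

definition uncertain_db :: "('n, 'v, 'c) atom set \<Rightarrow> bool" where
  "uncertain_db db \<longleftrightarrow> finite db \<and> (\<forall>A\<in>db. is_fact A)"

definition adom :: "('n, 'v, 'c) atom set \<Rightarrow> 'c set" where
  "adom db = {c. \<exists>A\<in>db. Const c \<in> set (args A)}"

definition consistent :: "('n, 'v, 'c) atom set \<Rightarrow> bool" where
  "consistent r \<longleftrightarrow> (\<forall>A\<in>r. \<forall>B\<in>r. key_equal A B \<longrightarrow> A = B)"

definition is_repair :: "('n, 'v, 'c) atom set \<Rightarrow> ('n, 'v, 'c) atom set \<Rightarrow> bool" where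
  "is_repair r db \<longleftrightarrow> r \<subseteq> db \<and> consistent r
      \<and> (\<forall>s. r \<subset> s \<and> s \<subseteq> db \<longrightarrow> \<not> consistent s)"

definition is_bcq :: "('n, 'v, 'c) atom set \<Rightarrow> bool" where
  "is_bcq q \<longleftrightarrow> finite q \<and> (\<forall>A\<in>q. wf_atom A)"

definition self_join_free :: "('n, 'v, 'c) atom set \<Rightarrow> bool" where
  "self_join_free q \<longleftrightarrow> (\<forall>A\<in>q. \<forall>B\<in>q. relname A = relname B \<longrightarrow> A = B)"

fun val_trm :: "('v \<Rightarrow> 'c) \<Rightarrow> ('v, 'c) trm \<Rightarrow> ('v, 'c) trm" where
  "val_trm \<theta> (Var v) = Const (\<theta> v)"
| "val_trm \<theta> (Const c) = Const c"

definition val_atom :: "('v \<Rightarrow> 'c) \<Rightarrow> ('n, 'v, 'c) atom \<Rightarrow> ('n, 'v, 'c) atom" where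
  "val_atom \<theta> A = Atom (relname A) (map (val_trm \<theta>) (args A))"

definition val_query :: "('v \<Rightarrow> 'c) \<Rightarrow> ('n, 'v, 'c) atom set \<Rightarrow> ('n, 'v, 'c) atom set" where
  "val_query \<theta> q = val_atom \<theta> ` q"

definition satisfies :: "('n, 'v, 'c) atom set \<Rightarrow> ('n, 'v, 'c) atom set \<Rightarrow> bool" where
  "satisfies db q \<longleftrightarrow> (\<exists>\<theta>. val_query \<theta> q \<subseteq> db)"

definition CERTAINTY :: "('n, 'v, 'c) atom set \<Rightarrow> ('n, 'v, 'c) atom set set" where
  "CERTAINTY q = {db. uncertain_db db \<and> (\<forall>r. is_repair r db \<longrightarrow> satisfies r q)}"

definition purified :: "('n, 'v, 'c) atom set \<Rightarrow> ('n, 'v, 'c) atom set \<Rightarrow> bool" where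
  "purified db q \<longleftrightarrow> (\<forall>A\<in>db. \<exists>\<theta>. A \<in> val_query \<theta> q \<and> val_query \<theta> q \<subseteq> db)"

definition subst_trm :: "'v list \<Rightarrow> 'c list \<Rightarrow> ('v, 'c) trm \<Rightarrow> ('v, 'c) trm" where
  "subst_trm ys bs t = (case t of Var v \<Rightarrow>
      (case map_of (zip ys bs) v of Some c \<Rightarrow> Const c | None \<Rightarrow> Var v) | Const c \<Rightarrow> Const c)"

definition subst_atom :: "'v list \<Rightarrow> 'c list \<Rightarrow> ('n, 'v, 'c) atom \<Rightarrow> ('n, 'v, 'c) atom" where
  "subst_atom ys bs A = Atom (relname A) (map (subst_trm ys bs) (args A))"

definition subst_query :: "'v list \<Rightarrow> 'c list \<Rightarrow> ('n, 'v, 'c) atom set \<Rightarrow> ('n, 'v, 'c) atom set" where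
  "subst_query ys bs q = subst_atom ys bs ` q"

end

theory Submission
  imports Defs
begin

text \<open>Because \<open>key F = {}\<close>, purification and self-join-freeness make all facts of \<open>db\<close>
  with the relation name of \<open>F\<close> instances of \<open>F\<close> that are pairwise key-equal: they form a single
  block. Every repair therefore contains exactly one of them, and each of them, say
  \<open>F[ys \<mapsto> bs]\<close>, is chosen by some repair that agrees with a given one everywhere else. Since
  no other atom of \<open>q\<close> uses that relation name, \<open>q\<close> holds in a repair choosing
  \<open>F[ys \<mapsto> bs]\<close> exactly when \<open>q'[ys \<mapsto> bs]\<close> holds in it.\<close>

lemma key_equal_sym: "key_equal A B \<Longrightarrow> key_equal B A"
  by (auto simp: key_equal_def)

lemma key_equal_trans: "key_equal A B \<Longrightarrow> key_equal B C \<Longrightarrow> key_equal A C"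
  by (auto simp: key_equal_def)

lemma key_equal_relname: "key_equal A B \<Longrightarrow> relname A = relname B"
  by (simp add: key_equal_def)

lemma consistent_insert:
  assumes "consistent r" and "\<And>B. B \<in> r \<Longrightarrow> key_equal A B \<Longrightarrow> A = B"
  shows "consistent (insert A r)"
  using assms by (auto simp: consistent_def dest: key_equal_sym)

lemma repair_meets_block:
  assumes "is_repair r db" and "A \<in> db"
  shows "\<exists>B\<in>r. key_equal A B"
proof (rule ccontr)
  assume none: "\<not> (\<exists>B\<in>r. key_equal A B)"
  have "consistent r" and maximal: "\<And>s. r \<subset> s \<Longrightarrow> s \<subseteq> db \<Longrightarrow> \<not> consistent s"
    using assms(1) by (auto simp: is_repair_def)
  have "key_equal A A"
    by (simp add: key_equal_def)
  then have "A \<notin> r"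
    using none by blast
  moreover have "consistent (insert A r)"
    using none by (intro consistent_insert[OF \<open>consistent r\<close>]) blast
  ultimately show False
    using maximal[of "insert A r"] assms by (auto simp: is_repair_def)
qed

lemma repair_swap_in_block:
  assumes r: "is_repair r db" and "A \<in> db"
  shows "is_repair ({x \<in> r. \<not> key_equal x A} \<union> {A}) db" (is "is_repair ?r' db")
proof -
  have cons_r: "consistent r" and "r \<subseteq> db"
    using r by (auto simp: is_repair_def)
  have "consistent ?r'"
    using cons_r by (auto simp: consistent_def dest: key_equal_sym)
  moreover have "\<not> consistent s" if "?r' \<subset> s" and "s \<subseteq> db" for s
  proof
    assume cons_s: "consistent s"
    obtain x where x: "x \<in> s" "x \<notin> ?r'"
      using \<open>?r' \<subset> s\<close> by blast
    have "A \<in> s"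
      using \<open>?r' \<subset> s\<close> by blast
    have "\<not> key_equal x A"
      using cons_s x \<open>A \<in> s\<close> unfolding consistent_def by blast
    then have "x \<notin> r"
      using x by blast
    \<comment> \<open>An element of \<open>r\<close> key-equal to \<open>x\<close> lies outside \<open>A\<close>'s block, hence in \<open>s\<close>.\<close>
    have "consistent (insert x r)"
    proof (rule consistent_insert[OF cons_r])
      fix B assume "B \<in> r" and "key_equal x B"
      then have "B \<in> s"
        using \<open>\<not> key_equal x A\<close> \<open>?r' \<subset> s\<close> by (blast dest: key_equal_trans)
      then show "x = B"
        using cons_s x \<open>key_equal x B\<close> unfolding consistent_def by blast
    qed
    then show False
      using r x \<open>s \<subseteq> db\<close> \<open>x \<notin> r\<close> unfolding is_repair_def by blast
  qed
  ultimately show ?thesis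
    using \<open>r \<subseteq> db\<close> \<open>A \<in> db\<close> by (auto simp: is_repair_def)
qed

lemma empty_not_in_CERTAINTY:
  assumes "q \<noteq> {}"
  shows "{} \<notin> CERTAINTY q"
proof
  assume "{} \<in> CERTAINTY q"
  moreover have "is_repair {} {}"
    by (auto simp: is_repair_def consistent_def)
  ultimately have "satisfies {} q"
    by (auto simp: CERTAINTY_def)
  then show False
    using assms by (simp add: satisfies_def val_query_def)
qed

lemma val_cong_avars:
  assumes "\<And>v. v \<in> avars G \<Longrightarrow> \<theta> v = \<sigma> v"
  shows "val_atom \<theta> G = val_atom \<sigma> G"
  unfolding val_atom_def
proof (intro arg_cong[where f="Atom (relname G)"] map_cong refl)
  fix t assume "t \<in> set (args G)"
  with assms show "val_trm \<theta> t = val_trm \<sigma> t"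
    by (cases t) (auto simp: avars_def vars_of_terms_def)
qed

lemma relname_val_atom [simp]: "relname (val_atom \<theta> A) = relname A"
  by (simp add: val_atom_def)

lemma relname_subst_atom [simp]: "relname (subst_atom ys bs A) = relname A"
  by (simp add: subst_atom_def)

lemma val_atom_key_free:
  assumes "key F = {}"
  shows "key_equal (val_atom \<theta> F) (val_atom \<sigma> F)"
proof -
  have "map (val_trm \<tau>) (take (keylen (relname F)) (args F)) = take (keylen (relname F)) (args F)"
    for \<tau>
  proof (rule map_idI)
    fix t assume "t \<in> set (take (keylen (relname F)) (args F))"
    with assms show "val_trm \<tau> t = t"
      by (cases t) (auto simp: key_def vars_of_terms_def)
  qed
  then show ?thesis
    by (simp add: key_equal_def val_atom_def take_map)
qed

lemma purified_relname_instance: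
  assumes "purified db q" and "self_join_free q" and "F \<in> q"
    and "A \<in> db" and "relname A = relname F"
  shows "\<exists>\<theta>. A = val_atom \<theta> F"
proof -
  obtain \<theta> G where "G \<in> q" and A: "A = val_atom \<theta> G"
    using assms(1,4) unfolding purified_def val_query_def by blast
  then have "G = F"
    using assms(2,3,5) unfolding self_join_free_def by simp
  then show ?thesis
    using A by blast
qed

lemma purified_key_free_block:
  assumes "purified db q" and "self_join_free q" and "F \<in> q" and "key F = {}"
    and "A \<in> db" and "B \<in> db" and "relname A = relname F" and "relname B = relname F"
  shows "key_equal A B"
  using purified_relname_instance[OF assms(1-3)] assms(5-8) val_atom_key_free[OF assms(4)]
  by metis

lemma val_subst_atom:
  "val_atom \<theta> (subst_atom ys bs G) =
   val_atom (\<lambda>v. case map_of (zip ys bs) v of Some c \<Rightarrow> c | None \<Rightarrow> \<theta> v) G"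
  unfolding val_atom_def subst_atom_def
  by (auto intro!: map_cong simp: subst_trm_def split: trm.split option.split)

lemma val_subst_atom_map:
  "val_atom \<sigma> (subst_atom ys (map \<theta> ys) G) =
   val_atom (\<lambda>v. if v \<in> set ys then \<theta> v else \<sigma> v) G"
proof -
  have "(\<lambda>v. case map_of (zip ys (map \<theta> ys)) v of Some c \<Rightarrow> c | None \<Rightarrow> \<sigma> v) =
        (\<lambda>v. if v \<in> set ys then \<theta> v else \<sigma> v)"
    by (auto simp: map_of_zip_map)
  then show ?thesis
    by (simp add: val_subst_atom)
qed

lemma subst_atom_map_eq_val_atom:
  assumes "avars F \<subseteq> set ys"
  shows "subst_atom ys (map \<theta> ys) F = val_atom \<theta> F"
  using assms
  by (auto simp: val_atom_def subst_atom_def avars_def vars_of_terms_def subst_trm_def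
      map_of_zip_map intro!: map_cong split: trm.split)

lemma val_subst_atom_absorb:
  assumes "set ys \<subseteq> avars F" and "val_atom \<theta> F = subst_atom ys bs F"
  shows "val_atom \<theta> (subst_atom ys bs G) = val_atom \<theta> G"
proof -
  have "\<theta> v = c" if "map_of (zip ys bs) v = Some c" for v c
  proof -
    have "Var v \<in> set (args F)"
      using that assms(1) by (auto simp: avars_def vars_of_terms_def dest: map_of_SomeD set_zip_leftD)
    then have "val_trm \<theta> (Var v) = subst_trm ys bs (Var v)"
      using assms(2) by (auto simp: val_atom_def subst_atom_def map_eq_conv)
    then show ?thesis
      using that by (simp add: subst_trm_def)
  qed
  then show ?thesis
    by (auto simp: val_subst_atom intro!: arg_cong[where f="\<lambda>\<tau>. val_atom \<tau> G"] split: option.split)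
qed

lemma adom_val_atom:
  assumes "val_atom \<theta> A \<in> db" and "v \<in> avars A"
  shows "\<theta> v \<in> adom db"
proof -
  have "Const (\<theta> v) \<in> set (args (val_atom \<theta> A))"
    using assms(2) by (force simp: val_atom_def avars_def vars_of_terms_def)
  then show ?thesis
    using assms(1) by (auto simp: adom_def)
qed

lemma CERTAINTY_imp_CERTAINTY_subst:
  assumes "db \<in> CERTAINTY q" and "self_join_free q" and "purified db q"
    and "F \<in> q" and "key F = {}" and "set ys \<subseteq> avars F"
    and A_in: "subst_atom ys bs F \<in> db"
  shows "db \<in> CERTAINTY (subst_query ys bs (q - {F}))"
  unfolding CERTAINTY_def
proof (intro CollectI conjI allI impI)
  show "uncertain_db db"
    using assms(1) by (simp add: CERTAINTY_def)
  define A where "A = subst_atom ys bs F"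
  fix r assume r: "is_repair r db"
  define r' where "r' = {x \<in> r. \<not> key_equal x A} \<union> {A}"
  have "is_repair r' db"
    unfolding r'_def A_def by (rule repair_swap_in_block[OF r A_in])
  then obtain \<theta> where \<theta>: "val_query \<theta> q \<subseteq> r'"
    using assms(1) by (auto simp: CERTAINTY_def satisfies_def)
  then have "val_atom \<theta> F \<in> r'"
    using assms(4) by (auto simp: val_query_def)
  moreover have "r' \<subseteq> db"
    using \<open>is_repair r' db\<close> by (simp add: is_repair_def)
  ultimately have "key_equal (val_atom \<theta> F) A"
    using purified_key_free_block[OF assms(3,2,4,5) _ A_in] by (auto simp: A_def)
  then have "val_atom \<theta> F = A"
    using \<open>val_atom \<theta> F \<in> r'\<close> by (auto simp: r'_def)
  have "val_atom \<theta> (subst_atom ys bs G) \<in> r" if "G \<in> q - {F}" for G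
  proof -
    have "relname G \<noteq> relname A"
      using that assms(2,4) by (auto simp: self_join_free_def A_def)
    moreover have "val_atom \<theta> G \<in> r'"
      using that \<theta> by (auto simp: val_query_def)
    ultimately have "val_atom \<theta> G \<in> r"
      by (auto simp: r'_def)
    moreover have "val_atom \<theta> (subst_atom ys bs G) = val_atom \<theta> G"
      using assms(6) \<open>val_atom \<theta> F = A\<close> unfolding A_def by (rule val_subst_atom_absorb)
    ultimately show ?thesis
      by simp
  qed
  then show "satisfies r (subst_query ys bs (q - {F}))"
    unfolding satisfies_def val_query_def subst_query_def by blast
qed

lemma CERTAINTY_subst_imp_CERTAINTY:
  assumes "uncertain_db db" and "db \<noteq> {}" and "self_join_free q" and "purified db q"
    and "F \<in> q" and "set ys = avars F"
    and certain_subst: "\<And>bs. length bs = length ys \<Longrightarrow> set bs \<subseteq> adom db \<Longrightarrow>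
        subst_atom ys bs F \<in> db \<Longrightarrow> db \<in> CERTAINTY (subst_query ys bs (q - {F}))"
  shows "db \<in> CERTAINTY q"
  unfolding CERTAINTY_def
proof (intro CollectI conjI allI impI)
  show "uncertain_db db" by fact
  fix r assume r: "is_repair r db"
  obtain \<theta>\<^sub>0 where "val_query \<theta>\<^sub>0 q \<subseteq> db"
    using assms(2,4) unfolding purified_def by blast
  then have "val_atom \<theta>\<^sub>0 F \<in> db"
    using assms(5) by (auto simp: val_query_def)
  then obtain A where "A \<in> r" and "relname A = relname F"
    using repair_meets_block[OF r] by (fastforce dest: key_equal_relname)
  moreover have "A \<in> db"
    using \<open>A \<in> r\<close> r by (auto simp: is_repair_def)
  ultimately obtain \<theta> where A: "A = val_atom \<theta> F"
    using purified_relname_instance[OF assms(4,3,5)] by blast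
  have "set (map \<theta> ys) \<subseteq> adom db"
    using \<open>A \<in> db\<close> A assms(6) adom_val_atom[of \<theta> F db] by auto
  moreover have "subst_atom ys (map \<theta> ys) F = A"
    using subst_atom_map_eq_val_atom[of F ys \<theta>] assms(6) A by simp
  ultimately obtain \<sigma> where \<sigma>: "val_query \<sigma> (subst_query ys (map \<theta> ys) (q - {F})) \<subseteq> r"
    using certain_subst[of "map \<theta> ys"] \<open>A \<in> db\<close> r by (auto simp: CERTAINTY_def satisfies_def)
  define \<tau> where "\<tau> = (\<lambda>v. if v \<in> set ys then \<theta> v else \<sigma> v)"
  have "val_atom \<tau> F = A"
    using A assms(6) by (auto simp: \<tau>_def intro: val_cong_avars)
  moreover have "val_atom \<tau> G \<in> r" if "G \<in> q - {F}" for G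
  proof -
    have "val_atom \<sigma> (subst_atom ys (map \<theta> ys) G) \<in> r"
      using \<sigma> that by (auto simp: val_query_def subst_query_def)
    then show ?thesis
      by (simp add: \<tau>_def val_subst_atom_map)
  qed
  ultimately have "val_query \<tau> q \<subseteq> r"
    using \<open>A \<in> r\<close> by (auto simp: val_query_def)
  then show "satisfies r q"
    by (auto simp: satisfies_def)
qed

theorem lemma8:
  fixes q q' :: "('n, 'v, 'c) atom set" and F :: "('n, 'v, 'c) atom"
    and ys :: "'v list" and db :: "('n, 'v, 'c) atom set"
  assumes "is_bcq q" and "self_join_free q"
    and "F \<in> q" and "key F = {}" and "q' = q - {F}"
    and "distinct ys" and "set ys = avars F"
    and "uncertain_db db" and "purified db q"
  shows "db \<in> CERTAINTY q \<longleftrightarrow>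
    db \<noteq> {} \<and>
    (\<forall>bs. length bs = length ys \<and> set bs \<subseteq> adom db \<longrightarrow>
        subst_atom ys bs F \<in> db \<longrightarrow> db \<in> CERTAINTY (subst_query ys bs q'))"
proof
  assume "db \<in> CERTAINTY q"
  moreover have "{} \<notin> CERTAINTY q"
    using assms(3) by (intro empty_not_in_CERTAINTY) blast
  ultimately show "db \<noteq> {} \<and> (\<forall>bs. length bs = length ys \<and> set bs \<subseteq> adom db \<longrightarrow>
      subst_atom ys bs F \<in> db \<longrightarrow> db \<in> CERTAINTY (subst_query ys bs q'))"
    using CERTAINTY_imp_CERTAINTY_subst[OF _ assms(2,9,3,4)] assms(5,7) by auto
next
  assume "db \<noteq> {} \<and> (\<forall>bs. length bs = length ys \<and> set bs \<subseteq> adom db \<longrightarrow>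
      subst_atom ys bs F \<in> db \<longrightarrow> db \<in> CERTAINTY (subst_query ys bs q'))"
  then show "db \<in> CERTAINTY q"
    using CERTAINTY_subst_imp_CERTAINTY[OF assms(8) _ assms(2,9,3)] assms(5,7) by auto
qed

end
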